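(* There exists an absolute constant $C>0$ such that the following holds. Let $\mathcal D$ be a distribution on $[0,1]\times\{0,1\}$, $m$ a positive integer, and $i\in\{0,\ldots,m\}$. For every $\alpha>0$, $$\sum_{j<i}\mathbb I\big[q_j>i/m-\alpha/\sqrt{\pi_j}\big]\sqrt{\pi_j}\le 3+C\log m\,\big(\alpha m+\sqrt{m\cdot\mathsf{SCDL}_m(\mathcal D)}\big),$$ where the sum is over $j\in\{0,\ldots,i-1\}$.
   Context: For $x\in\mathbb R$ write $x_+=\max\{x,0\}$. For $j\in\{0,\ldots,m\}$ let $w_j(p)=(1-|mp-j|)_+$, $\pi_j=\mathbb E_{(p,y)\sim\mathcal D}[w_j(p)]$ and $q_j=\mathbb E_{(p,y)\sim\mathcal D}[w_j(p)y]/\pi_j$; terms with $\pi_j=0$ contribute $0$. Define $$\mathsf{SCDL}_m(\mathcal D)=\max_{k=0,\ldots,m}\Big(\sum_{j=0}^{k}\pi_j\big(q_j-\tfrac{k+1}{m}\big)_+ +\sum_{j=k+1}^{m}\pi_j\big(\tfrac km-q_j\big)_+\Big).$$ *)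

theory Defs
  imports "HOL-Probability.Probability"
begin

definition is_pred_dist :: "(real \<times> real) measure \<Rightarrow> bool" where
  "is_pred_dist D \<longleftrightarrow> prob_space D \<and> sets D = sets (borel :: (real \<times> real) measure)
     \<and> (AE z in D. fst z \<in> {0..1} \<and> snd z \<in> {0, 1})"

definition wgt :: "nat \<Rightarrow> nat \<Rightarrow> real \<Rightarrow> real" where
  "wgt m j p = max (1 - \<bar>real m * p - real j\<bar>) 0"

definition piw :: "(real \<times> real) measure \<Rightarrow> nat \<Rightarrow> nat \<Rightarrow> real" where
  "piw D m j = (\<integral>z. wgt m j (fst z) \<partial>D)"

text \<open>If piw D m j = 0 then qw D m j = 0 (division by zero is 0); such terms
  contribute 0 wherever they appear.\<close>
definition qw :: "(real \<times> real) measure \<Rightarrow> nat \<Rightarrow> nat \<Rightarrow> real" where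
  "qw D m j = (\<integral>z. wgt m j (fst z) * snd z \<partial>D) / piw D m j"

definition SCDL :: "nat \<Rightarrow> (real \<times> real) measure \<Rightarrow> real" where
  "SCDL m D = Max ((\<lambda>k.
      (\<Sum>j\<in>{0..k}. piw D m j * max (qw D m j - (real k + 1) / real m) 0)
    + (\<Sum>j\<in>{k+1..m}. piw D m j * max (real k / real m - qw D m j) 0)) ` {0..m})"

end

theory Submission imports Defs "HOL-Analysis.Harmonic_Numbers"
begin

text \<open>Split the indices \<open>j < i\<close> into dyadic blocks \<open>2h \<le> i - j < 4h\<close>, \<open>h = 1, 2, 4, \<dots>\<close>;
  there are at most \<open>log\<^sub>2 m\<close> of them, plus the single index \<open>j = i - 1\<close>.
  In a block, an index with \<open>q\<^sub>j \<le> i/m - h/(2m)\<close> can only be counted if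
  \<open>\<surd>\<pi>\<^sub>j < 2\<alpha>m/h\<close>, so these contribute at most \<open>2h \<cdot> 2\<alpha>m/h = 4\<alpha>m\<close>.
  Every other index has \<open>q\<^sub>j - (i - h)/m > h/(2m)\<close>, so its weight \<open>\<pi>\<^sub>j\<close> is charged to
  the term \<open>k = i - h - 1\<close> of \<open>SCDL\<^sub>m\<close>: their weights sum to at most \<open>2m SCDL/h\<close>, and by
  Cauchy-Schwarz over the \<open>2h\<close> indices of the block their square roots sum to at most
  \<open>2 \<surd>(m SCDL)\<close>.\<close>

lemma sum_sqrt_le_sqrt_card_mult_sum:
  fixes a :: "'a \<Rightarrow> real"
  assumes "\<And>j. j \<in> A \<Longrightarrow> 0 \<le> a j"
  shows "(\<Sum>j\<in>A. sqrt (a j)) \<le> sqrt (card A * (\<Sum>j\<in>A. a j))"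
proof -
  have "(\<Sum>j\<in>A. sqrt (a j))\<^sup>2 \<le> (\<Sum>j\<in>A. (sqrt (a j))\<^sup>2) * card A"
    by (rule sum_squared_le_sum_of_squares)
  also have "(\<Sum>j\<in>A. (sqrt (a j))\<^sup>2) = (\<Sum>j\<in>A. a j)"
    using assms by (intro sum.cong) auto
  finally show ?thesis
    by (metis mult.commute real_le_rsqrt)
qed

lemma pow2_le_imp_le_ln:
  assumes "2 ^ n \<le> m"
  shows "2/3 * real n \<le> ln (real m)"
proof -
  have "real n \<le> log 2 m"
    using assms by (metis le_log2_of_power)
  then have "real n * ln 2 \<le> ln m"
    by (simp add: log_def field_simps)
  moreover have "real n * (2/3) \<le> real n * ln 2"
    using ln2_ge_two_thirds by (intro mult_left_mono) auto
  ultimately show ?thesis by linarith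
qed

lemma sum_lessThan_le_dyadic_blocks:
  fixes f :: "nat \<Rightarrow> real"
  assumes nonneg: "\<And>j. 0 \<le> f j" and last_le_1: "f (i - 1) \<le> 1" and i: "i < 2 ^ Suc n"
    and block: "\<And>h. 1 \<le> h \<Longrightarrow> (\<Sum>j | j < i \<and> 2*h \<le> i - j \<and> i - j < 4*h. f j) \<le> B"
  shows "(\<Sum>j<i. f j) \<le> 1 + n * B"
proof -
  have "(\<Sum>j | j < i \<and> i - j < 2 ^ Suc n. f j) \<le> 1 + n * B" for n
  proof (induction n)
    case 0
    have "(\<Sum>j | j < i \<and> i - j < 2 ^ Suc 0. f j) \<le> (\<Sum>j\<in>{i - 1}. f j)"
      by (intro sum_mono2) (auto simp: nonneg)
    then show ?case using last_le_1 by simp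
  next
    case (Suc n)
    have split: "{j. j < i \<and> i - j < 2 ^ Suc (Suc n)} = {j. j < i \<and> i - j < 2 ^ Suc n} \<union>
        {j. j < i \<and> 2 * 2^n \<le> i - j \<and> i - j < 4 * 2^n}"
      by auto
    have "(\<Sum>j | j < i \<and> i - j < 2 ^ Suc (Suc n). f j) =
        (\<Sum>j | j < i \<and> i - j < 2 ^ Suc n. f j) +
        (\<Sum>j | j < i \<and> 2 * 2^n \<le> i - j \<and> i - j < 4 * 2^n. f j)"
      unfolding split by (rule sum.union_disjoint) auto
    also have "\<dots> \<le> 1 + n * B + B"
      using Suc.IH block[of "2^n"] by (intro add_mono) auto
    finally show ?case by (simp add: algebra_simps)
  qed
  moreover have "{..<i} = {j. j < i \<and> i - j < 2 ^ Suc n}"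
    using i by auto
  ultimately show ?thesis by simp
qed

lemma indicator_sqrt_le_threshold:
  fixes p q :: real
  assumes p: "0 \<le> p" and \<alpha>: "0 \<le> \<alpha>" and \<delta>: "0 < \<delta>"
  shows "(if q > t - \<alpha> / sqrt p then sqrt p else 0)
    \<le> \<alpha> / \<delta> + sqrt (p * max (q - (t - 2*\<delta>)) 0 / \<delta>)"
proof (cases "q > t - \<alpha> / sqrt p \<and> p > 0")
  case False
  then show ?thesis using p \<alpha> \<delta> by auto
next
  case active: True
  have "sqrt p \<le> \<alpha> / \<delta> + sqrt (p * max (q - (t - 2*\<delta>)) 0 / \<delta>)"
  proof (cases "q \<le> t - \<delta>")
    case True
    with active have "\<delta> < \<alpha> / sqrt p" and "0 < sqrt p"
      by auto
    then have "sqrt p \<le> \<alpha> / \<delta>"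
      using \<delta> by (simp add: field_simps)
    then show ?thesis
      using p \<delta> by (simp add: add_increasing2)
  next
    case False
    then have "\<delta> \<le> max (q - (t - 2*\<delta>)) 0"
      by linarith
    then have "p * \<delta> \<le> p * max (q - (t - 2*\<delta>)) 0"
      using p by (rule mult_left_mono)
    then have "p \<le> p * max (q - (t - 2*\<delta>)) 0 / \<delta>"
      using \<delta> by (simp add: field_simps)
    then show ?thesis
      using \<alpha> \<delta> by (simp add: real_sqrt_le_mono add_increasing)
  qed
  then show ?thesis
    using active by simp
qed

lemma sum_indicator_sqrt_le_threshold:
  fixes \<pi> q :: "nat \<Rightarrow> real"
  assumes "finite J" "card J \<le> N" "\<And>j. 0 \<le> \<pi> j" "0 \<le> \<alpha>" "0 < \<delta>"
  shows "(\<Sum>j\<in>J. if q j > t - \<alpha> / sqrt (\<pi> j) then sqrt (\<pi> j) else 0)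
    \<le> N * \<alpha> / \<delta> + sqrt (N / \<delta> * (\<Sum>j\<in>J. \<pi> j * max (q j - (t - 2*\<delta>)) 0))"
proof -
  let ?e = "\<lambda>j. \<pi> j * max (q j - (t - 2*\<delta>)) 0 / \<delta>"
  have e_nonneg: "0 \<le> ?e j" for j
    using assms by simp
  have "(\<Sum>j\<in>J. if q j > t - \<alpha> / sqrt (\<pi> j) then sqrt (\<pi> j) else 0)
      \<le> (\<Sum>j\<in>J. \<alpha> / \<delta> + sqrt (?e j))"
    using assms by (intro sum_mono indicator_sqrt_le_threshold) auto
  also have "\<dots> = card J * \<alpha> / \<delta> + (\<Sum>j\<in>J. sqrt (?e j))"
    by (simp add: sum.distrib)
  also have "(\<Sum>j\<in>J. sqrt (?e j)) \<le> sqrt (card J * (\<Sum>j\<in>J. ?e j))"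
    using e_nonneg by (rule sum_sqrt_le_sqrt_card_mult_sum)
  also have "\<dots> \<le> sqrt (N * (\<Sum>j\<in>J. ?e j))"
    using assms e_nonneg by (intro real_sqrt_le_mono mult_right_mono sum_nonneg) auto
  also have "\<dots> = sqrt (N / \<delta> * (\<Sum>j\<in>J. \<pi> j * max (q j - (t - 2*\<delta>)) 0))"
    by (simp add: sum_divide_distrib[symmetric])
  also have "card J * \<alpha> / \<delta> \<le> N * \<alpha> / \<delta>"
    using assms by (intro divide_right_mono mult_right_mono) auto
  finally show ?thesis
    by simp
qed

lemma dyadic_block_le:
  fixes \<pi> q :: "nat \<Rightarrow> real"
  assumes \<pi>: "\<And>j. 0 \<le> \<pi> j" and \<alpha>: "0 \<le> \<alpha>" and m: "0 < m" and i: "i \<le> m" and h: "1 \<le> h"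
    and S: "\<And>k. k \<le> m \<Longrightarrow> (\<Sum>j\<in>{0..k}. \<pi> j * max (q j - (real k + 1) / real m) 0) \<le> S"
  shows "(\<Sum>j | j < i \<and> 2*h \<le> i - j \<and> i - j < 4*h.
      if q j > real i / real m - \<alpha> / sqrt (\<pi> j) then sqrt (\<pi> j) else 0)
    \<le> 4 * \<alpha> * m + 2 * sqrt (m * S)"
proof -
  define J where "J = {j. j < i \<and> 2*h \<le> i - j \<and> i - j < 4*h}"
  define \<delta> where "\<delta> = real h / (2 * real m)"
  let ?excess = "\<lambda>k j. \<pi> j * max (q j - (real k + 1) / real m) 0"
  have \<delta>_pos: "0 < \<delta>" and card_over_\<delta>: "real (2*h) / \<delta> = 4 * m"
    and first_term: "real (2*h) * \<alpha> / \<delta> = 4 * \<alpha> * m"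
    using h m by (auto simp: \<delta>_def field_simps)
  have "0 \<le> (\<Sum>j\<in>{0..0}. ?excess 0 j)"
    using \<pi> by (intro sum_nonneg) auto
  then have "0 \<le> S"
    using S[of 0] by linarith
  have "finite J"
    unfolding J_def by simp
  have "card J \<le> card ((\<lambda>d. i - d) ` {2*h..<4*h})"
    unfolding J_def by (intro card_mono) (auto intro!: image_eqI[where x="i - _"])
  also have "\<dots> \<le> card {2*h..<4*h}"
    by (rule card_image_le) simp
  finally have card_J: "card J \<le> 2*h"
    by simp
  have excess_J: "(\<Sum>j\<in>J. \<pi> j * max (q j - (real i / real m - 2*\<delta>)) 0) \<le> S"
  proof (cases "J = {}")
    case False
    define k where "k = i - h - 1"
    have "h < i"
      using False h unfolding J_def by auto
    then have "real i / real m - 2*\<delta> = (real k + 1) / real m"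
      using m by (simp add: k_def \<delta>_def of_nat_diff field_simps)
    moreover have "(\<Sum>j\<in>J. ?excess k j) \<le> (\<Sum>j\<in>{0..k}. ?excess k j)"
      using \<pi> by (intro sum_mono2) (auto simp: J_def k_def)
    moreover have "k \<le> m"
      using i by (simp add: k_def)
    ultimately show ?thesis
      using S[of k] by simp
  qed (use \<open>0 \<le> S\<close> in simp)
  have "(\<Sum>j\<in>J. if q j > real i / real m - \<alpha> / sqrt (\<pi> j) then sqrt (\<pi> j) else 0)
      \<le> real (2*h) * \<alpha> / \<delta>
        + sqrt (real (2*h) / \<delta> * (\<Sum>j\<in>J. \<pi> j * max (q j - (real i / real m - 2*\<delta>)) 0))"
    using \<open>finite J\<close> card_J \<pi> \<alpha> \<delta>_pos by (rule sum_indicator_sqrt_le_threshold)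
  also have "\<dots> \<le> real (2*h) * \<alpha> / \<delta> + sqrt (real (2*h) / \<delta> * S)"
    using excess_J \<delta>_pos by (intro add_left_mono real_sqrt_le_mono mult_left_mono) auto
  also have "\<dots> = 4 * \<alpha> * m + 2 * sqrt (m * S)"
    using first_term card_over_\<delta> by (simp add: real_sqrt_mult)
  finally show ?thesis
    unfolding J_def .
qed

lemma wgt_borel_measurable:
  assumes "sets D = sets (borel :: (real \<times> real) measure)"
  shows "(\<lambda>z. wgt m j (fst z)) \<in> borel_measurable D"
proof -
  have "(\<lambda>z::real \<times> real. wgt m j (fst z)) \<in> borel_measurable borel"
    unfolding wgt_def by (intro borel_measurable_continuous_onI continuous_intros)
  then show ?thesis by (subst measurable_cong_sets[OF assms refl])
qed

lemma piw_nonneg: "0 \<le> piw D m j"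
  unfolding piw_def wgt_def by simp

lemma piw_le_1:
  assumes "is_pred_dist D"
  shows "piw D m j \<le> 1"
proof -
  interpret prob_space D
    using assms unfolding is_pred_dist_def by simp
  have w_le_1: "wgt m j p \<le> 1" for p
    unfolding wgt_def by simp
  have "integrable D (\<lambda>z. wgt m j (fst z))"
    using assms w_le_1 wgt_borel_measurable
    by (intro integrable_const_bound[where B=1]) (auto simp: is_pred_dist_def wgt_def)
  then have "piw D m j \<le> (\<integral>z. 1 \<partial>D)"
    unfolding piw_def by (intro integral_mono) (auto simp: w_le_1)
  then show ?thesis by (simp add: prob_space)
qed

lemma SCDL_ge_upper_excess:
  assumes "k \<le> m"
  shows "(\<Sum>j\<in>{0..k}. piw D m j * max (qw D m j - (real k + 1) / real m) 0) \<le> SCDL m D"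
proof -
  have "(\<Sum>j\<in>{0..k}. piw D m j * max (qw D m j - (real k + 1) / real m) 0)
     \<le> (\<Sum>j\<in>{0..k}. piw D m j * max (qw D m j - (real k + 1) / real m) 0)
       + (\<Sum>j\<in>{k+1..m}. piw D m j * max (real k / real m - qw D m j) 0)"
    by (simp add: sum_nonneg piw_nonneg)
  also have "\<dots> \<le> SCDL m D"
    unfolding SCDL_def using assms by (intro Max_ge) auto
  finally show ?thesis .
qed

lemma SCDL_nonneg: "0 \<le> SCDL m D"
proof -
  have "0 \<le> (\<Sum>j\<in>{0..0}. piw D m j * max (qw D m j - (real 0 + 1) / real m) 0)"
    by (simp add: piw_nonneg)
  also have "\<dots> \<le> SCDL m D"
    by (rule SCDL_ge_upper_excess) simp
  finally show ?thesis .
qed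

theorem lemma7p3:
  shows "\<exists>C>0. \<forall>(D :: (real \<times> real) measure) (m :: nat) (i :: nat) (\<alpha> :: real).
    is_pred_dist D \<longrightarrow> m > 0 \<longrightarrow> i \<le> m \<longrightarrow> \<alpha> > 0 \<longrightarrow>
    (\<Sum>j<i. (if qw D m j > real i / real m - \<alpha> / sqrt (piw D m j)
              then sqrt (piw D m j) else 0))
      \<le> 3 + C * ln (real m) * (\<alpha> * real m + sqrt (real m * SCDL m D))"
proof (intro exI[of _ 6] conjI allI impI)
  fix D :: "(real \<times> real) measure" and m i :: nat and \<alpha> :: real
  assume D: "is_pred_dist D" and m: "m > 0" and i: "i \<le> m" and \<alpha>: "\<alpha> > 0"
  define X where "X = \<alpha> * m + sqrt (m * SCDL m D)"
  obtain n where n: "2 ^ n \<le> m" "m < 2 ^ Suc n"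
    using ex_power_ivl1[of 2 m] m by auto
  have X_nonneg: "0 \<le> X" and "0 \<le> real n * sqrt (m * SCDL m D)"
    using \<alpha> SCDL_nonneg by (simp_all add: X_def)
  have "(\<Sum>j<i. (if qw D m j > real i / real m - \<alpha> / sqrt (piw D m j) then sqrt (piw D m j) else 0))
      \<le> 1 + n * (4 * \<alpha> * m + 2 * sqrt (m * SCDL m D))"
    using dyadic_block_le[OF piw_nonneg less_imp_le[OF \<alpha>] m i _ SCDL_ge_upper_excess] i n
    by (intro sum_lessThan_le_dyadic_blocks) (auto simp: piw_nonneg piw_le_1[OF D])
  also have "n * (4 * \<alpha> * m + 2 * sqrt (m * SCDL m D)) \<le> 2/3 * real n * (6 * X)"
    using \<open>0 \<le> real n * sqrt (m * SCDL m D)\<close> by (simp add: X_def algebra_simps)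
  also have "\<dots> \<le> ln m * (6 * X)"
    using X_nonneg by (intro mult_right_mono[OF pow2_le_imp_le_ln[OF n(1)]]) simp
  finally show "(\<Sum>j<i. (if qw D m j > real i / real m - \<alpha> / sqrt (piw D m j)
      then sqrt (piw D m j) else 0)) \<le> 3 + 6 * ln (real m) * (\<alpha> * real m + sqrt (real m * SCDL m D))"
    unfolding X_def[symmetric] by linarith
qed simp

end
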